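(* Let ${\mathcal R}$ be a similarity relation, $\mu$ a cut value, and $P;\sigma;\mathfrak{d}$ a configuration. If one step of $\mathsf{HOPSU}$ transforms $P;\sigma;\mathfrak{d}$ into $P';\sigma\vartheta;\mathfrak{d}\wedge\mathfrak{d}'$, and $\tau$ is an $({\mathcal R},\mu)$-unifier of $P'$ with degree $\mathfrak{d}''$, then $\vartheta\tau$ is an $({\mathcal R},\mu)$-unifier of $P$ with degree $\mathfrak{d}'\wedge\mathfrak{d}''$.
   Context: Terms: simply typed $\lambda$-terms over disjoint countably infinite sets $\mathcal{V}$ (typed variables) and $\mathcal{F}$ (typed constants), types $\tau::=\delta\mid\tau\to\tau$. Terms are identified modulo $\alpha$, kept $\beta$-normal, and $\eta$-expanded except that arguments of free variables are kept $\eta$-normal (i.e. are bound variables); a term is written $\lambda x_1,\dots,x_n.h(t_1,\dots,t_m)$ with head $h$. Free variables are written $F,G,H,X,Y,\dots$, bound variables $x,y,z,\dots$. A higher-order pattern is a term where every free variable occurrence is applied to a list of pairwise distinct bound variables; all terms in problems and substitutions are higher-order patterns. Substitutions $\sigma$ are type-preserving maps with finite domain $\mathit{Dom}(\sigma)=\{X\mid X\sigma\neq X\}$, applied postfix ($t\sigma$, capture-avoiding, followed by $\beta$-normalization); $\sigma\vartheta$ means first $\sigma$ then $\vartheta$; $\varepsilon$ is the identity; $\varphi|_V$ is the restriction to $V$; $\mathtt{fv}(t)$ is the set of free variables. Fuzzy setting: T-norm $\wedge=\min$. ${\mathcal R}_A$ is a similarity relation (reflexive, symmetric, min-transitive map to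 $[0,1]$) on $\mathcal{F}\cup\mathcal{V}$ with ${\mathcal R}_A(x,y)=0$ for distinct variables, ${\mathcal R}_A(f,g)=0$ for constants of different types, ${\mathcal R}_A(x,f)=0$ for a variable and a constant. It induces ${\mathcal R}$ on terms: on normal forms ${\mathcal R}(a,b)={\mathcal R}_A(a,b)$ for symbols, ${\mathcal R}((t_1\,s_1),(t_2\,s_2))={\mathcal R}(t_1,t_2)\wedge{\mathcal R}(s_1,s_2)$, ${\mathcal R}(\lambda x.t,\lambda y.s)={\mathcal R}(t\{x\mapsto z\},s\{y\mapsto z\})$ for fresh $z$ of the same type, $0$ otherwise. A cut value is $\mu\in(0,1]$. An equation is written $t\simeq^?_{{\mathcal R},\mu}s$; a unification problem is a finite set of equations. A substitution $\sigma$ is an $({\mathcal R},\mu)$-unifier of $\{t_1\simeq^?_{{\mathcal R},\mu}s_1,\dots,t_n\simeq^?_{{\mathcal R},\mu}s_n\}$ with degree $\mathfrak{d}$ if ${\mathcal R}(t_1\sigma,s_1\sigma)\wedge\dots\wedge{\mathcal R}(t_n\sigma,s_n\sigma)=\mathfrak{d}\ge\mu$. Algorithm $\mathsf{HOPSU}$: it works on configurations $P;\sigma;\mathfrak{d}$ ($P$ a problem, $\sigma$ a substitution, $\mathfrak{d}\ge\mu$ a degree) or $\bot$; a step applies one of the following rules to a selected equation ($\uplus$ is disjoint union): (Abs) $\{\lambda x.t\simeq^?\lambda x.s\}\uplus P;\sigma;\mathfrak{d}\leadsto\{t\simeq^?s\}\cup P;\sigma;\mathfrak{d}$. (Dec)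 $\{f(t_1,\dots,t_n)\simeq^?g(s_1,\dots,s_n)\}\uplus P;\sigma;\mathfrak{d}\leadsto\{t_1\simeq^?s_1,\dots,t_n\simeq^?s_n\}\cup P;\sigma;\mathfrak{d}\wedge{\mathcal R}(f,g)$, where $f,g$ are rigid heads, $n\ge0$, and $\mathfrak{d}\wedge{\mathcal R}(f,g)\ge\mu$. (SV) $\{F(x_1,\dots,x_n)\simeq^?F(y_1,\dots,y_n)\}\uplus P;\sigma;\mathfrak{d}\leadsto P\vartheta;\sigma\vartheta;\mathfrak{d}$, where $\{z_1,\dots,z_m\}=\{x_i\mid x_i=y_i\}$ and $\vartheta=\{F\mapsto\lambda x_1,\dots,x_n.H(z_1,\dots,z_m)\}$ with $H$ fresh. (Ori) $\{a(s_1,\dots,s_m)\simeq^?F(x_1,\dots,x_n)\}\uplus P;\sigma;\mathfrak{d}\leadsto\{F(x_1,\dots,x_n)\simeq^?a(s_1,\dots,s_m)\}\cup P;\sigma;\mathfrak{d}$, where $F$ is free and $a$ is a constant or $a\in\{x_1,\dots,x_n\}$. (LF) $\{F(x_1,\dots,x_n)\simeq^?a(s_1,\dots,s_m)\}\uplus P;\sigma;\mathfrak{d}\leadsto P\vartheta;\sigma\vartheta;\mathfrak{d}$, where $F\notin\mathtt{fv}(a(s_1,\dots,s_m))$, $a$ is a constant, a free variable, or in $\{x_1,\dots,x_n\}$, $\mathsf{VarElim}(F(x_1,\dots,x_n),a(s_1,\dots,s_m))=\varphi$, and $\vartheta=\varphi|_V$ with $V=\{F\}\cup\mathtt{fv}(a(s_1,\dots,s_m))$.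 (Fail) $\{t\simeq^?s\}\uplus P;\sigma;\mathfrak{d}\leadsto\bot$ if no other rule applies to the selected equation. $\mathsf{VarElim}(t,s)$ starts from $\{t\simeq^?s\};\varepsilon$ and applies as long as possible: (VE1) $\{F(x_1,\dots,x_n)\simeq^?a(s_1,\dots,s_m)\}\uplus P;\sigma\leadsto\{H_1(x_1,\dots,x_n)\simeq^?s_1,\dots,H_m(x_1,\dots,x_n)\simeq^?s_m\}\cup P;\sigma\vartheta$, where $a$ is a constant or in $\{x_1,\dots,x_n\}$, $\vartheta=\{F\mapsto\lambda x_1,\dots,x_n.a(H_1(x_1,\dots,x_n),\dots,H_m(x_1,\dots,x_n))\}$ with $H_i$ fresh of appropriate types; (VE2) $\{F(x_1,\dots,x_n)\simeq^?G(y_1,\dots,y_m)\}\uplus P;\sigma\leadsto P\vartheta;\sigma\vartheta$, where $\{x_1,\dots,x_n\}\cap\{y_1,\dots,y_m\}=\{z_1,\dots,z_k\}$ and $\vartheta=\{F\mapsto\lambda x_1,\dots,x_n.H(z_1,\dots,z_k),G\mapsto\lambda y_1,\dots,y_m.H(z_1,\dots,z_k)\}$ with $H$ fresh. If it ends in $\emptyset;\varphi$, then $\mathsf{VarElim}(t,s)=\varphi$. *)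

theory Defs
  imports Complex_Main
begin

section \<open>Simply typed terms (de Bruijn, beta-normal, eta-long patterns)\<close>

datatype ty = Base nat | Fun ty ty

text \<open>Free variables and constants are typed names; the two sets are disjoint
  (different constructors below) and countably infinite.\<close>
type_synonym fvar = "nat \<times> ty"
type_synonym const = "nat \<times> ty"

datatype head = Con const | Bd nat

text \<open>A term in normal form: an abstraction, a rigid head applied to (eta-long)
  arguments, or a free variable applied to bound variables (eta-normal arguments).\<close>
datatype trm = Lam ty trm | Rig head "trm list" | Flex fvar "nat list"

type_synonym eqn = "trm \<times> trm"
type_synonym subst = "fvar \<Rightarrow> trm"

fun mk_fun :: "ty list \<Rightarrow> ty \<Rightarrow> ty" where
  "mk_fun [] T = T"
| "mk_fun (U # Us) T = Fun U (mk_fun Us T)"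

fun args_of :: "ty \<Rightarrow> ty list" where
  "args_of (Base b) = []"
| "args_of (Fun U T) = U # args_of T"

definition lams :: "ty list \<Rightarrow> trm \<Rightarrow> trm" where
  "lams Us t = foldr Lam Us t"

declare list_all2_mono[mono]

text \<open>Well-typed (beta-normal, eta-long) higher-order patterns in a context of bound
  variable types (index 0 = innermost binder).\<close>
inductive wtp :: "ty list \<Rightarrow> trm \<Rightarrow> ty \<Rightarrow> bool" where
  wt_lam: "wtp (T # \<Gamma>) t U \<Longrightarrow> wtp \<Gamma> (Lam T t) (Fun T U)"
| wt_con: "snd c = mk_fun Ts (Base b) \<Longrightarrow> list_all2 (wtp \<Gamma>) ts Ts
           \<Longrightarrow> wtp \<Gamma> (Rig (Con c) ts) (Base b)"
| wt_bd: "i < length \<Gamma> \<Longrightarrow> \<Gamma> ! i = mk_fun Ts (Base b) \<Longrightarrow> list_all2 (wtp \<Gamma>) ts Ts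
           \<Longrightarrow> wtp \<Gamma> (Rig (Bd i) ts) (Base b)"
| wt_flex: "snd F = mk_fun Ts (Base b) \<Longrightarrow> distinct xs
           \<Longrightarrow> list_all2 (\<lambda>x T. x < length \<Gamma> \<and> \<Gamma> ! x = T) xs Ts
           \<Longrightarrow> wtp \<Gamma> (Flex F xs) (Base b)"

fun fv :: "trm \<Rightarrow> fvar set" where
  "fv (Lam T t) = fv t"
| "fv (Rig h ts) = (\<Union>t\<in>set ts. fv t)"
| "fv (Flex F xs) = {F}"

section \<open>Substitutions\<close>

definition liftr :: "(nat \<Rightarrow> nat) \<Rightarrow> nat \<Rightarrow> nat" where
  "liftr f i = (case i of 0 \<Rightarrow> 0 | Suc k \<Rightarrow> Suc (f k))"

fun ren :: "(nat \<Rightarrow> nat) \<Rightarrow> trm \<Rightarrow> trm" where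
  "ren f (Lam T t) = Lam T (ren (liftr f) t)"
| "ren f (Rig (Con c) ts) = Rig (Con c) (map (ren f) ts)"
| "ren f (Rig (Bd i) ts) = Rig (Bd (f i)) (map (ren f) ts)"
| "ren f (Flex F xs) = Flex F (map f xs)"

fun strip :: "nat \<Rightarrow> trm \<Rightarrow> trm" where
  "strip (Suc n) (Lam T t) = strip n t"
| "strip n t = t"

text \<open>Application of a substitution followed by beta-normalisation: for a pattern
  F(x1..xn), the (closed) term (sigma F) = \<lambda>y1..yn. b reduces to b[yi := xi].\<close>
fun subst :: "subst \<Rightarrow> trm \<Rightarrow> trm" where
  "subst \<sigma> (Lam T t) = Lam T (subst \<sigma> t)"
| "subst \<sigma> (Rig h ts) = Rig h (map (subst \<sigma>) ts)"
| "subst \<sigma> (Flex F xs) = ren (\<lambda>j. rev xs ! j) (strip (length xs) (\<sigma> F))"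

text \<open>The eta-long form of H(x1,...,xn) (H applied to bound variables xs).\<close>
definition eta_app :: "fvar \<Rightarrow> nat list \<Rightarrow> trm" where
  "eta_app H xs = (let Us = drop (length xs) (args_of (snd H)); k = length Us
                   in lams Us (Flex H (map (\<lambda>i. i + k) xs @ rev [0..<k])))"

definition var_term :: "fvar \<Rightarrow> trm" where
  "var_term X = eta_app X []"

definition idsub :: subst where
  "idsub = var_term"

definition dom_s :: "subst \<Rightarrow> fvar set" where
  "dom_s \<sigma> = {X. \<sigma> X \<noteq> var_term X}"

definition wt_subst :: "subst \<Rightarrow> bool" where
  "wt_subst \<sigma> \<longleftrightarrow> finite (dom_s \<sigma>) \<and> (\<forall>X. wtp [] (\<sigma> X) (snd X))"

text \<open>comp_s sigma theta = "sigma theta": first sigma, then theta.\<close>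
definition comp_s :: "subst \<Rightarrow> subst \<Rightarrow> subst" where
  "comp_s \<sigma> \<theta> = (\<lambda>X. subst \<theta> (\<sigma> X))"

definition restr :: "subst \<Rightarrow> fvar set \<Rightarrow> subst" where
  "restr \<phi> V = (\<lambda>X. if X \<in> V then \<phi> X else var_term X)"

definition vars_s :: "subst \<Rightarrow> fvar set" where
  "vars_s \<sigma> = dom_s \<sigma> \<union> (\<Union>X\<in>dom_s \<sigma>. fv (\<sigma> X))"

definition subst_eq :: "subst \<Rightarrow> eqn \<Rightarrow> eqn" where
  "subst_eq \<theta> e = (subst \<theta> (fst e), subst \<theta> (snd e))"

definition fv_prob :: "eqn set \<Rightarrow> fvar set" where
  "fv_prob P = (\<Union>e\<in>P. fv (fst e) \<union> fv (snd e))"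

section \<open>Similarity\<close>

definition similarity :: "(const \<Rightarrow> const \<Rightarrow> real) \<Rightarrow> bool" where
  "similarity RA \<longleftrightarrow>
     (\<forall>a b. 0 \<le> RA a b \<and> RA a b \<le> 1) \<and>
     (\<forall>a. RA a a = 1) \<and>
     (\<forall>a b. RA a b = RA b a) \<and>
     (\<forall>a b c. min (RA a b) (RA b c) \<le> RA a c) \<and>
     (\<forall>a b. snd a \<noteq> snd b \<longrightarrow> RA a b = 0)"

fun simh :: "(const \<Rightarrow> const \<Rightarrow> real) \<Rightarrow> head \<Rightarrow> head \<Rightarrow> real" where
  "simh RA (Con c) (Con c') = RA c c'"
| "simh RA (Bd i) (Bd j) = (if i = j then 1 else 0)"
| "simh RA _ _ = 0"

text \<open>Extension to terms (curried application, abstraction via a common fresh variable).\<close>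
fun simt :: "(const \<Rightarrow> const \<Rightarrow> real) \<Rightarrow> trm \<Rightarrow> trm \<Rightarrow> real"
and simts :: "(const \<Rightarrow> const \<Rightarrow> real) \<Rightarrow> trm list \<Rightarrow> trm list \<Rightarrow> real" where
  "simt RA (Lam T t) (Lam U s) = (if T = U then simt RA t s else 0)"
| "simt RA (Rig h ts) (Rig g ss) = min (simh RA h g) (simts RA ts ss)"
| "simt RA (Flex F xs) (Flex G ys) = (if F = G \<and> xs = ys then 1 else 0)"
| "simt RA _ _ = 0"
| "simts RA [] [] = 1"
| "simts RA (t # ts) (s # ss) = min (simt RA t s) (simts RA ts ss)"
| "simts RA _ _ = 0"

section \<open>Problems, configurations, unifiers\<close>

definition wf_eqn :: "eqn \<Rightarrow> bool" where
  "wf_eqn e \<longleftrightarrow> (\<exists>\<Gamma> T. wtp \<Gamma> (fst e) T \<and> wtp \<Gamma> (snd e) T)"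

definition config :: "real \<Rightarrow> eqn set \<Rightarrow> subst \<Rightarrow> real \<Rightarrow> bool" where
  "config \<mu> P \<sigma> d \<longleftrightarrow> finite P \<and> (\<forall>e\<in>P. wf_eqn e) \<and> wt_subst \<sigma> \<and> \<mu> \<le> d \<and> d \<le> 1"

definition degree :: "(const \<Rightarrow> const \<Rightarrow> real) \<Rightarrow> eqn set \<Rightarrow> subst \<Rightarrow> real" where
  "degree RA P \<sigma> = Min (insert 1 ((\<lambda>e. simt RA (subst \<sigma> (fst e)) (subst \<sigma> (snd e))) ` P))"

definition unifier :: "(const \<Rightarrow> const \<Rightarrow> real) \<Rightarrow> real \<Rightarrow> eqn set \<Rightarrow> subst \<Rightarrow> real \<Rightarrow> bool" where
  "unifier RA \<mu> P \<sigma> d \<longleftrightarrow> wt_subst \<sigma> \<and> degree RA P \<sigma> = d \<and> \<mu> \<le> d"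

section \<open>VarElim\<close>

fun idx :: "nat list \<Rightarrow> nat \<Rightarrow> nat" where
  "idx [] z = 0"
| "idx (x # xs) z = (if x = z then 0 else Suc (idx xs z))"

text \<open>Rigid head a, seen inside the binder prefix \<lambda>x1..xn (bound variable xk becomes
  index n-1-k).\<close>
fun inner_head :: "nat list \<Rightarrow> head \<Rightarrow> head" where
  "inner_head xs (Con c) = Con c"
| "inner_head xs (Bd i) = Bd (length xs - 1 - idx xs i)"

text \<open>W: variables that fresh variables must avoid (those of the calling configuration).\<close>
inductive ve_step :: "fvar set \<Rightarrow> eqn set \<times> subst \<Rightarrow> eqn set \<times> subst \<Rightarrow> bool" for W where
  VE1: "Q = insert (Flex F xs, Rig a ss) Q0 \<Longrightarrow> (Flex F xs, Rig a ss) \<notin> Q0 \<Longrightarrow>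
        (\<exists>c. a = Con c) \<or> (\<exists>i. a = Bd i \<and> i \<in> set xs) \<Longrightarrow>
        length Hs = length ss \<Longrightarrow> distinct Hs \<Longrightarrow>
        set Hs \<inter> (W \<union> fv_prob Q \<union> vars_s \<sigma>) = {} \<Longrightarrow>
        \<theta> = var_term(F := lams (args_of (snd F))
                 (Rig (inner_head xs a) (map (\<lambda>H. eta_app H (rev [0..<length xs])) Hs))) \<Longrightarrow>
        wt_subst \<theta> \<Longrightarrow>
        ve_step W (Q, \<sigma>) (set (zip (map (\<lambda>H. eta_app H xs) Hs) ss) \<union> Q0, comp_s \<sigma> \<theta>)"
| VE2: "Q = insert (Flex F xs, Flex G ys) Q0 \<Longrightarrow> (Flex F xs, Flex G ys) \<notin> Q0 \<Longrightarrow>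
        zs = filter (\<lambda>x. x \<in> set ys) xs \<Longrightarrow>
        H \<notin> W \<union> fv_prob Q \<union> vars_s \<sigma> \<Longrightarrow>
        \<theta> = (var_term(G := lams (args_of (snd G))
                   (Flex H (map (\<lambda>z. length ys - 1 - idx ys z) zs))))
              (F := lams (args_of (snd F))
                   (Flex H (map (\<lambda>z. length xs - 1 - idx xs z) zs))) \<Longrightarrow>
        wt_subst \<theta> \<Longrightarrow>
        ve_step W (Q, \<sigma>) (subst_eq \<theta> ` Q0, comp_s \<sigma> \<theta>)"

definition var_elim :: "fvar set \<Rightarrow> trm \<Rightarrow> trm \<Rightarrow> subst \<Rightarrow> bool" where
  "var_elim W t s \<phi> \<longleftrightarrow> (ve_step W)\<^sup>*\<^sup>* ({(t, s)}, idsub) ({}, \<phi>)"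

section \<open>One step of HOPSU\<close>

text \<open>hstep RA mu P sigma d P' theta d' : the rule transforms P;sigma;d into
  P';(sigma theta);(d \<and> d'), where theta and d' are the substitution and degree
  contributed by the rule (identity / 1 when the rule contributes none).\<close>
inductive hstep :: "(const \<Rightarrow> const \<Rightarrow> real) \<Rightarrow> real \<Rightarrow> eqn set \<Rightarrow> subst \<Rightarrow> real
                     \<Rightarrow> eqn set \<Rightarrow> subst \<Rightarrow> real \<Rightarrow> bool" for RA \<mu> where
  Abs: "P = insert (Lam T t, Lam T s) P0 \<Longrightarrow> (Lam T t, Lam T s) \<notin> P0 \<Longrightarrow>
        hstep RA \<mu> P \<sigma> d (insert (t, s) P0) idsub 1"
| Dec: "P = insert (Rig f ts, Rig g ss) P0 \<Longrightarrow> (Rig f ts, Rig g ss) \<notin> P0 \<Longrightarrow>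
        length ts = length ss \<Longrightarrow> \<mu> \<le> min d (simh RA f g) \<Longrightarrow>
        hstep RA \<mu> P \<sigma> d (set (zip ts ss) \<union> P0) idsub (simh RA f g)"
| SV: "P = insert (Flex F xs, Flex F ys) P0 \<Longrightarrow> (Flex F xs, Flex F ys) \<notin> P0 \<Longrightarrow>
        length xs = length ys \<Longrightarrow> H \<notin> fv_prob P \<union> vars_s \<sigma> \<Longrightarrow>
        \<theta> = var_term(F := lams (args_of (snd F))
                 (Flex H [length xs - 1 - i. i \<leftarrow> [0..<length xs], xs ! i = ys ! i])) \<Longrightarrow>
        wt_subst \<theta> \<Longrightarrow>
        hstep RA \<mu> P \<sigma> d (subst_eq \<theta> ` P0) \<theta> 1"
| Ori: "P = insert (Rig a ss, Flex F xs) P0 \<Longrightarrow> (Rig a ss, Flex F xs) \<notin> P0 \<Longrightarrow>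
        (\<exists>c. a = Con c) \<or> (\<exists>i. a = Bd i \<and> i \<in> set xs) \<Longrightarrow>
        hstep RA \<mu> P \<sigma> d (insert (Flex F xs, Rig a ss) P0) idsub 1"
| LF: "P = insert (Flex F xs, u) P0 \<Longrightarrow> (Flex F xs, u) \<notin> P0 \<Longrightarrow>
        (\<exists>a ss. u = Rig a ss \<and> ((\<exists>c. a = Con c) \<or> (\<exists>i. a = Bd i \<and> i \<in> set xs)))
          \<or> (\<exists>G ys. u = Flex G ys) \<Longrightarrow>
        F \<notin> fv u \<Longrightarrow>
        var_elim (fv_prob P \<union> vars_s \<sigma>) (Flex F xs) u \<phi> \<Longrightarrow>
        \<theta> = restr \<phi> (insert F (fv u)) \<Longrightarrow>
        hstep RA \<mu> P \<sigma> d (subst_eq \<theta> ` P0) \<theta> 1"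

end

theory Submission
  imports Defs
begin

text \<open>The rules Abs, Dec and Ori keep the substitution, and the degree of the selected
  equation under \<open>\<tau>\<close> is \<open>d'\<close> combined with the degrees of the equations that replace it.
  The rules SV and LF contribute a substitution \<open>\<vartheta>\<close> that syntactically unifies the selected
  equation, so under \<open>\<vartheta>\<tau>\<close> it has degree 1 while every other equation has the degree of its
  \<open>\<vartheta>\<close>-instance in \<open>P'\<close> under \<open>\<tau>\<close>. For LF this is the soundness of VarElim, proved with an
  invariant: the left-hand variables of the pending equations are isolated, and every unifier
  of the pending problem, composed after the accumulated substitution, unifies the original
  equation. Underneath lies the fact that composing substitutions agrees with applying them
  in turn, which holds for well-scoped patterns.\<close>

definition arity :: "fvar \<Rightarrow> nat" where
  "arity X = length (args_of (snd X))"

text \<open>An untyped substitute for \<open>wtp\<close>: it is all that the algebra of substitutions needs, and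
  it is easy to maintain for the intermediate problems of VarElim.\<close>
fun scoped :: "nat \<Rightarrow> trm \<Rightarrow> bool" where
  "scoped n (Lam T t) = scoped (Suc n) t"
| "scoped n (Rig (Con c) ts) = (\<forall>t\<in>set ts. scoped n t)"
| "scoped n (Rig (Bd i) ts) = (i < n \<and> (\<forall>t\<in>set ts. scoped n t))"
| "scoped n (Flex F xs) = (length xs = arity F \<and> (\<forall>x\<in>set xs. x < n))"

definition scoped_subst :: "subst \<Rightarrow> bool" where
  "scoped_subst \<rho> \<longleftrightarrow>
     (\<forall>X. \<exists>Us b. length Us = arity X \<and> \<rho> X = lams Us b \<and> scoped (arity X) b)"

lemma lams_Nil [simp]: "lams [] t = t"
  by (simp add: lams_def)

lemma lams_Cons [simp]: "lams (U # Us) t = Lam U (lams Us t)"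
  by (simp add: lams_def)

lemma scoped_lams [simp]: "scoped n (lams Us t) = scoped (n + length Us) t"
  by (induction Us arbitrary: n) auto

lemma strip_lams [simp]: "strip (length Us) (lams Us t) = t"
  by (induction Us) auto

lemma fv_lams [simp]: "fv (lams Us t) = fv t"
  by (induction Us) auto

lemma subst_lams [simp]: "subst \<sigma> (lams Us t) = lams Us (subst \<sigma> t)"
  by (induction Us) auto

lemma scoped_RigD: "scoped n (Rig h ts) \<Longrightarrow> t \<in> set ts \<Longrightarrow> scoped n t"
  by (cases h) auto

lemma scoped_substD:
  "scoped_subst \<rho> \<Longrightarrow> \<exists>Us b. length Us = arity X \<and> \<rho> X = lams Us b \<and> scoped (arity X) b"
  unfolding scoped_subst_def by blast

section \<open>Renaming bound variables\<close>

lemma liftr_comp: "liftr f (liftr g i) = liftr (\<lambda>a. f (g a)) i"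
  by (simp add: liftr_def split: nat.splits)

lemma ren_ren: "ren f (ren g u) = ren (\<lambda>i. f (g i)) u"
proof (induction u arbitrary: f g)
  case (Lam T t)
  then show ?case by (simp add: liftr_comp)
next
  case (Rig h ts)
  then show ?case by (cases h) auto
qed simp

lemma ren_cong: "scoped k u \<Longrightarrow> (\<And>i. i < k \<Longrightarrow> f i = g i) \<Longrightarrow> ren f u = ren g u"
proof (induction u arbitrary: k f g)
  case (Lam T t)
  have "\<And>i. i < Suc k \<Longrightarrow> liftr f i = liftr g i"
    using Lam.prems(2) by (simp add: liftr_def split: nat.splits)
  then show ?case using Lam.IH[of "Suc k" "liftr f" "liftr g"] Lam.prems(1) by simp
next
  case (Rig h ts)
  have "map (ren f) ts = map (ren g) ts"
  proof (rule map_cong[OF refl])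
    fix t assume "t \<in> set ts"
    then show "ren f t = ren g t"
      using Rig.IH Rig.prems scoped_RigD by blast
  qed
  then show ?case using Rig.prems by (cases h) auto
qed simp

lemma scoped_ren: "scoped j u \<Longrightarrow> (\<And>i. i < j \<Longrightarrow> f i < k) \<Longrightarrow> scoped k (ren f u)"
proof (induction u arbitrary: j k f)
  case (Lam T t)
  have "\<And>i. i < Suc j \<Longrightarrow> liftr f i < Suc k"
    using Lam.prems(2) by (simp add: liftr_def split: nat.splits)
  then show ?case using Lam.IH[of "Suc j" "liftr f" "Suc k"] Lam.prems(1) by simp
next
  case (Rig h ts)
  have "\<forall>t\<in>set ts. scoped k (ren f t)"
  proof
    fix t assume "t \<in> set ts"
    then show "scoped k (ren f t)"
      using Rig.IH Rig.prems scoped_RigD by blast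
  qed
  then show ?case using Rig.prems by (cases h) auto
qed auto

lemma fv_ren [simp]: "fv (ren f u) = fv u"
proof (induction u arbitrary: f)
  case (Rig h ts)
  then show ?case by (cases h) auto
qed auto

lemma fv_strip [simp]: "fv (strip n u) = fv u"
  by (induction n u rule: strip.induct) auto

lemma ren_lams:
  "ren f (lams Us t) =
     lams Us (ren (\<lambda>i. if i < length Us then i else f (i - length Us) + length Us) t)"
proof (induction Us arbitrary: f)
  case (Cons U Us)
  have "(\<lambda>i. if i < length Us then i else liftr f (i - length Us) + length Us)
      = (\<lambda>i. if i < length (U # Us) then i else f (i - length (U # Us)) + length (U # Us))"
    by (rule ext) (auto simp: liftr_def split: nat.splits intro!: arg_cong[where f = f])
  then show ?case by (simp add: Cons.IH)
qed simp

lemma eta_app_eq: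
  assumes "k = arity H - length xs"
  shows "eta_app H xs =
    lams (drop (length xs) (args_of (snd H))) (Flex H (map (\<lambda>i. i + k) xs @ rev [0..<k]))"
  using assms by (simp add: eta_app_def Let_def arity_def)

lemma length_args_of: "length (args_of (snd H)) = arity H"
  by (simp add: arity_def)

lemma ren_eta_app: "ren f (eta_app H xs) = eta_app H (map f xs)"
proof -
  define k where "k = arity H - length xs"
  let ?g = "\<lambda>i. if i < k then i else f (i - k) + k"
  have len: "length (drop (length xs) (args_of (snd H))) = k"
    by (simp add: k_def length_args_of)
  have eq: "eta_app H (map f xs) =
      lams (drop (length xs) (args_of (snd H))) (Flex H (map (\<lambda>i. i + k) (map f xs) @ rev [0..<k]))"
    using eta_app_eq[of k H "map f xs"] by (simp add: k_def)
  have "?g \<circ> (\<lambda>i. i + k) = (\<lambda>i. i + k) \<circ> f"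
    by (rule ext) simp
  moreover have "map ?g (rev [0..<k]) = rev [0..<k]"
    by (rule map_idI) simp
  ultimately show ?thesis
    unfolding eta_app_eq[OF k_def] eq ren_lams len by simp
qed

lemma fv_eta_app [simp]: "fv (eta_app H xs) = {H}"
  by (simp add: eta_app_def Let_def)

lemma scoped_eta_app:
  "scoped m (eta_app H xs) \<longleftrightarrow> length xs \<le> arity H \<and> (\<forall>x\<in>set xs. x < m)"
proof -
  define k where "k = arity H - length xs"
  have "scoped m (eta_app H xs) \<longleftrightarrow> length xs + k = arity H \<and> (\<forall>x\<in>set xs. x < m)"
    by (auto simp: eta_app_eq[OF k_def] length_args_of ball_Un simp flip: k_def
        dest: ball_imageD)
  then show ?thesis
    unfolding k_def by linarith
qed

lemma fv_var_term [simp]: "fv (var_term X) = {X}"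
  by (simp add: var_term_def)

section \<open>Applying and composing substitutions\<close>

lemma fv_subst: "fv (subst \<sigma> t) = (\<Union>X\<in>fv t. fv (\<sigma> X))"
  by (induction t) auto

lemma subst_cong: "(\<And>X. X \<in> fv t \<Longrightarrow> \<sigma> X = \<sigma>' X) \<Longrightarrow> subst \<sigma> t = subst \<sigma>' t"
  by (induction t) auto

lemma subst_Flex_lams:
  "\<theta> F = lams Us b \<Longrightarrow> length xs = length Us \<Longrightarrow> subst \<theta> (Flex F xs) = ren ((!) (rev xs)) b"
  by simp

lemma map_rev_nth_rev_upt: "map ((!) (rev xs)) (rev [0..<length xs]) = xs"
  by (metis length_rev map_nth rev_map rev_rev_ident)

lemma subst_id_on_fv:
  "scoped n t \<Longrightarrow> (\<And>X. X \<in> fv t \<Longrightarrow> \<sigma> X = var_term X) \<Longrightarrow> subst \<sigma> t = t"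
proof (induction t arbitrary: n)
  case (Rig h ts)
  have "map (subst \<sigma>) ts = ts"
  proof (rule map_idI)
    fix t assume "t \<in> set ts"
    then show "subst \<sigma> t = t"
      using Rig.IH Rig.prems scoped_RigD by fastforce
  qed
  then show ?case by simp
next
  case (Flex F xs)
  have len: "length xs = length (args_of (snd F))"
    using Flex.prems(1) by (simp add: arity_def)
  have "\<sigma> F = lams (args_of (snd F)) (Flex F (rev [0..<length xs]))"
    using Flex.prems(2) len by (simp add: var_term_def eta_app_def Let_def)
  from subst_Flex_lams[where \<theta> = \<sigma> and F = F, OF this len] show ?case
    by (simp only: ren.simps map_rev_nth_rev_upt)
qed auto

lemma scoped_apply_subst: "scoped n t \<Longrightarrow> scoped_subst \<theta> \<Longrightarrow> scoped n (subst \<theta> t)"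
proof (induction t arbitrary: n)
  case (Rig h ts)
  have "\<forall>t\<in>set ts. scoped n (subst \<theta> t)"
    using Rig.IH Rig.prems scoped_RigD by blast
  then show ?case using Rig.prems by (cases h) auto
next
  case (Flex F xs)
  obtain Us b where Us: "length Us = arity F" "\<theta> F = lams Us b" "scoped (arity F) b"
    using scoped_substD[OF Flex(2)] by blast
  have "subst \<theta> (Flex F xs) = ren ((!) (rev xs)) b"
    using Us Flex(1) by (intro subst_Flex_lams) auto
  moreover have "scoped n (ren ((!) (rev xs)) b)"
  proof (rule scoped_ren[OF Us(3)])
    fix i assume "i < arity F"
    then have "rev xs ! i \<in> set xs"
      using Flex(1) by (metis length_rev nth_mem scoped.simps(4) set_rev)
    then show "rev xs ! i < n" using Flex(1) by simp
  qed
  ultimately show ?case by simp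
qed simp

lemma subst_ren: "scoped k u \<Longrightarrow> scoped_subst \<rho> \<Longrightarrow> subst \<rho> (ren f u) = ren f (subst \<rho> u)"
proof (induction u arbitrary: k f)
  case (Lam T t)
  then show ?case using Lam.IH[of "Suc k" "liftr f"] by simp
next
  case (Rig h ts)
  have "map (\<lambda>t. subst \<rho> (ren f t)) ts = map (\<lambda>t. ren f (subst \<rho> t)) ts"
  proof (rule map_cong[OF refl])
    fix t assume "t \<in> set ts"
    then show "subst \<rho> (ren f t) = ren f (subst \<rho> t)"
      using Rig.IH Rig.prems scoped_RigD by blast
  qed
  then show ?case by (cases h) auto
next
  case (Flex K zs)
  obtain Us b where Us: "length Us = arity K" "\<rho> K = lams Us b" "scoped (arity K) b"
    using scoped_substD[OF Flex(2)] by blast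
  have len: "length zs = length Us" using Flex(1) Us(1) by simp
  have "subst \<rho> (ren f (Flex K zs)) = ren ((!) (rev (map f zs))) b"
    using Us(2) len by simp
  also have "\<dots> = ren (\<lambda>i. f (rev zs ! i)) b"
    using Us(3) by (rule ren_cong) (use len Us(1) in \<open>simp add: rev_map\<close>)
  also have "\<dots> = ren f (subst \<rho> (Flex K zs))"
    using Us(2) len by (simp add: ren_ren)
  finally show ?case .
qed

lemma subst_comp_s:
  "scoped n t \<Longrightarrow> scoped_subst \<theta> \<Longrightarrow> scoped_subst \<rho> \<Longrightarrow>
     subst (comp_s \<theta> \<rho>) t = subst \<rho> (subst \<theta> t)"
proof (induction t arbitrary: n)
  case (Rig h ts)
  have "map (subst (comp_s \<theta> \<rho>)) ts = map (\<lambda>t. subst \<rho> (subst \<theta> t)) ts"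
  proof (rule map_cong[OF refl])
    fix t assume "t \<in> set ts"
    then show "subst (comp_s \<theta> \<rho>) t = subst \<rho> (subst \<theta> t)"
      using Rig.IH Rig.prems scoped_RigD by blast
  qed
  then show ?case by simp
next
  case (Flex F xs)
  obtain Us b where Us: "length Us = arity F" "\<theta> F = lams Us b" "scoped (arity F) b"
    using scoped_substD[OF Flex(2)] by blast
  have len: "length xs = length Us" using Flex(1) Us(1) by simp
  have "comp_s \<theta> \<rho> F = lams Us (subst \<rho> b)"
    by (simp add: comp_s_def Us(2))
  then have "subst (comp_s \<theta> \<rho>) (Flex F xs) = ren ((!) (rev xs)) (subst \<rho> b)"
    using len by (rule subst_Flex_lams)
  also have "\<dots> = subst \<rho> (ren ((!) (rev xs)) b)"
    using subst_ren[OF Us(3) Flex(3)] by simp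
  also have "\<dots> = subst \<rho> (subst \<theta> (Flex F xs))"
    using Us(2) len by simp
  finally show ?case .
qed simp

lemma scoped_subst_comp_s:
  assumes "scoped_subst \<theta>" and "scoped_subst \<rho>"
  shows "scoped_subst (comp_s \<theta> \<rho>)"
  unfolding scoped_subst_def
proof
  fix X
  obtain Us b where "length Us = arity X" "\<theta> X = lams Us b" "scoped (arity X) b"
    using scoped_substD[OF assms(1)] by blast
  then show "\<exists>Us b. length Us = arity X \<and> comp_s \<theta> \<rho> X = lams Us b \<and> scoped (arity X) b"
    using scoped_apply_subst[OF _ assms(2)] by (auto simp: comp_s_def)
qed

section \<open>Typing\<close>

lemma args_of_mk_fun [simp]: "args_of (mk_fun Ts (Base b)) = Ts"
  by (induction Ts) auto

lemma mk_fun_args_of: "\<exists>b. T = mk_fun (args_of T) (Base b)"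
  by (induction T) auto

lemma wtp_scoped: "wtp \<Gamma> t T \<Longrightarrow> scoped (length \<Gamma>) t"
  by (induction rule: wtp.induct)
    (auto simp: list_all2_conv_all_nth in_set_conv_nth arity_def)

lemma wtp_FunE: "wtp \<Gamma> t (Fun A B) \<Longrightarrow> \<exists>t'. t = Lam A t' \<and> wtp (A # \<Gamma>) t' B"
  by (erule wtp.cases) auto

lemma wtp_lams_form:
  "wtp \<Gamma> t T \<Longrightarrow>
     \<exists>Us b. t = lams Us b \<and> length Us = length (args_of T) \<and> scoped (length \<Gamma> + length Us) b"
proof (induction T arbitrary: \<Gamma> t)
  case (Base b)
  then show ?case using wtp_scoped by (intro exI[of _ "[]"]) auto
next
  case (Fun A B)
  then obtain t' where t': "t = Lam A t'" "wtp (A # \<Gamma>) t' B"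
    using wtp_FunE by blast
  then obtain Us b where "t' = lams Us b" "length Us = length (args_of B)"
      "scoped (length (A # \<Gamma>) + length Us) b"
    using Fun.IH(2) by blast
  then show ?case using t' by (intro exI[of _ "A # Us"] exI[of _ b]) auto
qed

lemma wt_subst_scoped: "wt_subst \<sigma> \<Longrightarrow> scoped_subst \<sigma>"
  unfolding scoped_subst_def wt_subst_def arity_def
  using wtp_lams_form by fastforce

lemma wtp_strip: "wtp \<Gamma> t (mk_fun Ts B) \<Longrightarrow> wtp (rev Ts @ \<Gamma>) (strip (length Ts) t) B"
proof (induction Ts arbitrary: \<Gamma> t)
  case Nil
  then show ?case by (cases t) auto
next
  case (Cons U Us)
  then obtain t' where "t = Lam U t'" "wtp (U # \<Gamma>) t' (mk_fun Us B)"
    using wtp_FunE by fastforce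
  then show ?case using Cons.IH by simp
qed

lemma wtp_lams: "wtp (rev Us @ \<Gamma>) t B \<Longrightarrow> wtp \<Gamma> (lams Us t) (mk_fun Us B)"
  by (induction Us arbitrary: \<Gamma>) (auto intro: wtp.wt_lam)

lemma inj_on_liftr: "inj_on f {..<n} \<Longrightarrow> inj_on (liftr f) {..<Suc n}"
  unfolding inj_on_def by (auto simp: liftr_def split: nat.splits)

text \<open>Injectivity keeps the arguments of free variables distinct, as patterns require.\<close>
lemma wtp_ren:
  "wtp \<Delta> u T \<Longrightarrow> (\<And>i. i < length \<Delta> \<Longrightarrow> f i < length \<Gamma> \<and> \<Gamma> ! f i = \<Delta> ! i) \<Longrightarrow>
     inj_on f {..<length \<Delta>} \<Longrightarrow> wtp \<Gamma> (ren f u) T"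
proof (induction arbitrary: \<Gamma> f rule: wtp.induct)
  case (wt_lam T \<Delta> t U)
  have "\<And>i. i < length (T # \<Delta>) \<Longrightarrow>
      liftr f i < length (T # \<Gamma>) \<and> (T # \<Gamma>) ! liftr f i = (T # \<Delta>) ! i"
    using wt_lam.prems(1) by (auto simp: liftr_def split: nat.splits)
  moreover have "inj_on (liftr f) {..<length (T # \<Delta>)}"
    using inj_on_liftr[OF wt_lam.prems(2)] by simp
  ultimately show ?case using wt_lam.IH by (auto intro: wtp.wt_lam)
next
  case (wt_con c Ts b \<Delta> ts)
  have "list_all2 (wtp \<Gamma>) (map (ren f) ts) Ts"
    unfolding list_all2_map1 using wt_con.IH
    by (rule list_all2_mono) (use wt_con.prems in blast)
  then show ?case using wt_con.hyps(1) by (auto intro: wtp.wt_con)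
next
  case (wt_bd i \<Delta> Ts b ts)
  have "list_all2 (wtp \<Gamma>) (map (ren f) ts) Ts"
    unfolding list_all2_map1 using wt_bd.IH
    by (rule list_all2_mono) (use wt_bd.prems in blast)
  then show ?case using wt_bd.hyps(1,2) wt_bd.prems(1)[of i] by (auto intro: wtp.wt_bd)
next
  case (wt_flex F Ts b xs \<Delta>)
  have "set xs \<subseteq> {..<length \<Delta>}"
    using wt_flex.hyps(3) by (auto simp: list_all2_conv_all_nth in_set_conv_nth)
  then have "distinct (map f xs)"
    using wt_flex.hyps(2) inj_on_subset[OF wt_flex.prems(2)] by (simp add: distinct_map)
  moreover have "list_all2 (\<lambda>x T. x < length \<Gamma> \<and> \<Gamma> ! x = T) (map f xs) Ts"
    unfolding list_all2_map1 using wt_flex.hyps(3)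
    by (rule list_all2_mono) (use wt_flex.prems(1) in auto)
  ultimately show ?case using wt_flex.hyps(1) by (auto intro: wtp.wt_flex)
qed

lemma wtp_subst: "wtp \<Gamma> t T \<Longrightarrow> wt_subst \<tau> \<Longrightarrow> wtp \<Gamma> (subst \<tau> t) T"
proof (induction rule: wtp.induct)
  case (wt_lam T \<Gamma> t U)
  then show ?case by (auto intro: wtp.wt_lam)
next
  case (wt_con c Ts b \<Gamma> ts)
  have "list_all2 (wtp \<Gamma>) (map (subst \<tau>) ts) Ts"
    unfolding list_all2_map1 using wt_con.IH
    by (rule list_all2_mono) (use wt_con.prems in blast)
  then show ?case using wt_con.hyps(1) by (auto intro: wtp.wt_con)
next
  case (wt_bd i \<Gamma> Ts b ts)
  have "list_all2 (wtp \<Gamma>) (map (subst \<tau>) ts) Ts"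
    unfolding list_all2_map1 using wt_bd.IH
    by (rule list_all2_mono) (use wt_bd.prems in blast)
  then show ?case using wt_bd.hyps(1,2) by (auto intro: wtp.wt_bd)
next
  case (wt_flex F Ts b xs \<Gamma>)
  have len: "length xs = length Ts"
    using wt_flex.hyps(3) by (rule list_all2_lengthD)
  have "wtp [] (\<tau> F) (mk_fun Ts (Base b))"
    using wt_flex.prems wt_flex.hyps(1) unfolding wt_subst_def by metis
  from wtp_strip[OF this]
  have body: "wtp (rev Ts) (strip (length Ts) (\<tau> F)) (Base b)" by simp
  have "rev xs ! i < length \<Gamma> \<and> \<Gamma> ! (rev xs ! i) = rev Ts ! i" if "i < length (rev Ts)" for i
    using that wt_flex.hyps(3) len by (auto simp: rev_nth list_all2_conv_all_nth)
  moreover have "inj_on ((!) (rev xs)) {..<length (rev Ts)}"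
    using wt_flex.hyps(2) len by (auto simp: inj_on_def nth_eq_iff_index_eq)
  ultimately show ?case
    using wtp_ren[OF body] len by simp
qed

lemma wtp_var_term: "wtp [] (var_term X) (snd X)"
proof -
  define Us where "Us = args_of (snd X)"
  have vt: "var_term X = lams Us (Flex X (rev [0..<length Us]))"
    by (simp add: var_term_def eta_app_def Let_def Us_def)
  obtain b where b: "snd X = mk_fun Us (Base b)"
    using mk_fun_args_of Us_def by blast
  have "list_all2 (\<lambda>x T. x < length (rev Us) \<and> rev Us ! x = T) (rev [0..<length Us]) Us"
    by (auto simp: list_all2_conv_all_nth rev_nth)
  then have "wtp (rev Us @ []) (Flex X (rev [0..<length Us])) (Base b)"
    using b by (auto intro!: wtp.wt_flex)
  from wtp_lams[OF this] show ?thesis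
    by (simp only: vt b)
qed

lemma scoped_var_term: "scoped 0 (var_term X)"
  using wtp_scoped[OF wtp_var_term[of X]] by simp

lemma wt_subst_idsub: "wt_subst idsub"
  unfolding wt_subst_def dom_s_def idsub_def using wtp_var_term by simp

lemma subst_idsub: "scoped n t \<Longrightarrow> subst idsub t = t"
  by (rule subst_id_on_fv) (simp_all add: idsub_def)

lemma dom_s_comp_s: "dom_s (comp_s \<theta> \<rho>) \<subseteq> dom_s \<theta> \<union> dom_s \<rho>"
  unfolding dom_s_def comp_s_def
  using subst_id_on_fv[OF scoped_var_term] by fastforce

lemma wt_subst_comp_s: "wt_subst \<theta> \<Longrightarrow> wt_subst \<rho> \<Longrightarrow> wt_subst (comp_s \<theta> \<rho>)"
  using dom_s_comp_s[of \<theta> \<rho>] by (auto simp: wt_subst_def comp_s_def wtp_subst intro: finite_subset)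

lemma wt_subst_restr: "wt_subst \<phi> \<Longrightarrow> wt_subst (restr \<phi> V)"
proof -
  assume wt: "wt_subst \<phi>"
  have "dom_s (restr \<phi> V) \<subseteq> dom_s \<phi>"
    unfolding dom_s_def restr_def by auto
  then show ?thesis
    using wt wtp_var_term unfolding wt_subst_def restr_def by (auto intro: finite_subset)
qed

lemma wt_subst_scoped_image: "wt_subst \<sigma> \<Longrightarrow> scoped 0 (\<sigma> X)"
  unfolding wt_subst_def using wtp_scoped by fastforce

lemma comp_s_assoc:
  assumes "wt_subst \<sigma>" and "scoped_subst \<theta>" and "scoped_subst \<rho>"
  shows "comp_s \<sigma> (comp_s \<theta> \<rho>) = comp_s (comp_s \<sigma> \<theta>) \<rho>"
proof
  fix X
  show "comp_s \<sigma> (comp_s \<theta> \<rho>) X = comp_s (comp_s \<sigma> \<theta>) \<rho> X"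
    using subst_comp_s[OF wt_subst_scoped_image[OF assms(1)] assms(2,3)]
    by (simp add: comp_s_def)
qed

lemma comp_s_idsub: "wt_subst \<phi> \<Longrightarrow> comp_s \<phi> idsub = \<phi>"
  by (rule ext) (simp add: comp_s_def subst_idsub[OF wt_subst_scoped_image])

section \<open>Problems under substitution\<close>

definition scoped_prob :: "eqn set \<Rightarrow> bool" where
  "scoped_prob Q \<longleftrightarrow> (\<forall>e\<in>Q. \<exists>n. scoped n (fst e) \<and> scoped n (snd e))"

lemma scoped_prob_empty [simp]: "scoped_prob {}"
  by (simp add: scoped_prob_def)

lemma scoped_prob_insert [simp]:
  "scoped_prob (insert e Q) \<longleftrightarrow> (\<exists>n. scoped n (fst e) \<and> scoped n (snd e)) \<and> scoped_prob Q"
  by (simp add: scoped_prob_def)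

lemma scoped_prob_Un [simp]: "scoped_prob (Q \<union> Q') \<longleftrightarrow> scoped_prob Q \<and> scoped_prob Q'"
  by (auto simp: scoped_prob_def)

lemma scoped_prob_image_subst_eq:
  "scoped_prob Q \<Longrightarrow> scoped_subst \<theta> \<Longrightarrow> scoped_prob (subst_eq \<theta> ` Q)"
  by (fastforce simp: scoped_prob_def subst_eq_def intro: scoped_apply_subst)

lemma config_scoped_prob: "config \<mu> P \<sigma> d \<Longrightarrow> scoped_prob P"
  unfolding config_def wf_eqn_def scoped_prob_def by (metis wtp_scoped)

lemma scoped_prob_zip:
  "\<forall>t\<in>set ts. scoped n t \<Longrightarrow> \<forall>s\<in>set ss. scoped n s \<Longrightarrow> scoped_prob (set (zip ts ss))"
  unfolding scoped_prob_def by (metis prod.collapse set_zip_leftD set_zip_rightD)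

lemma image_subst_eq_comp_s:
  assumes "scoped_prob Q" and "scoped_subst \<theta>" and "scoped_subst \<rho>"
  shows "subst_eq (comp_s \<theta> \<rho>) ` Q = subst_eq \<rho> ` subst_eq \<theta> ` Q"
  unfolding image_image
proof (rule image_cong[OF refl])
  fix e assume "e \<in> Q"
  then obtain n where "scoped n (fst e)" "scoped n (snd e)"
    using assms(1) by (auto simp: scoped_prob_def)
  then show "subst_eq (comp_s \<theta> \<rho>) e = subst_eq \<rho> (subst_eq \<theta> e)"
    using subst_comp_s assms(2,3) by (simp add: subst_eq_def)
qed

lemma fv_prob_insert [simp]: "fv_prob (insert e Q) = fv (fst e) \<union> fv (snd e) \<union> fv_prob Q"
  by (simp add: fv_prob_def)

lemma fv_prob_Un [simp]: "fv_prob (Q \<union> Q') = fv_prob Q \<union> fv_prob Q'"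
  by (simp add: fv_prob_def)

lemma fv_prob_mono: "Q \<subseteq> Q' \<Longrightarrow> fv_prob Q \<subseteq> fv_prob Q'"
  by (auto simp: fv_prob_def)

lemma image_subst_eq_id_on:
  assumes "scoped_prob Q" and "\<And>X. X \<in> fv_prob Q \<Longrightarrow> \<theta> X = var_term X"
  shows "subst_eq \<theta> ` Q = Q"
proof -
  have "subst_eq \<theta> e = e" if "e \<in> Q" for e
  proof -
    obtain n where "scoped n (fst e)" "scoped n (snd e)"
      using assms(1) \<open>e \<in> Q\<close> by (auto simp: scoped_prob_def)
    moreover have "\<theta> X = var_term X" if "X \<in> fv (fst e) \<union> fv (snd e)" for X
      using assms(2) \<open>e \<in> Q\<close> that unfolding fv_prob_def by blast
    ultimately show ?thesis
      by (simp add: subst_eq_def subst_id_on_fv)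
  qed
  then show ?thesis by force
qed

lemma image_subst_eq_idsub: "scoped_prob Q \<Longrightarrow> subst_eq idsub ` Q = Q"
  by (rule image_subst_eq_id_on) (simp_all add: idsub_def)

definition unifies :: "subst \<Rightarrow> eqn set \<Rightarrow> bool" where
  "unifies \<rho> Q \<longleftrightarrow> (\<forall>e\<in>Q. subst \<rho> (fst e) = subst \<rho> (snd e))"

lemma unifies_insert [simp]:
  "unifies \<rho> (insert e Q) \<longleftrightarrow> subst \<rho> (fst e) = subst \<rho> (snd e) \<and> unifies \<rho> Q"
  by (simp add: unifies_def)

lemma unifies_Un [simp]: "unifies \<rho> (Q \<union> Q') \<longleftrightarrow> unifies \<rho> Q \<and> unifies \<rho> Q'"
  by (auto simp: unifies_def)

lemma unifies_iff: "unifies \<rho> Q \<longleftrightarrow> (\<forall>e\<in>subst_eq \<rho> ` Q. fst e = snd e)"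
  by (simp add: unifies_def subst_eq_def)

lemma unifies_comp_s:
  "scoped_prob Q \<Longrightarrow> scoped_subst \<theta> \<Longrightarrow> scoped_subst \<rho> \<Longrightarrow>
     unifies (comp_s \<theta> \<rho>) Q \<longleftrightarrow> unifies \<rho> (subst_eq \<theta> ` Q)"
  by (simp add: unifies_iff image_subst_eq_comp_s)

lemma unifies_Rig_zip:
  "length ts = length ss \<Longrightarrow> unifies \<rho> (set (zip ts ss)) \<Longrightarrow>
     subst \<rho> (Rig a ts) = subst \<rho> (Rig a ss)"
  by (induction ts ss rule: list_induct2) (auto simp: unifies_def)

section \<open>Degrees\<close>

definition eqn_degree :: "(const \<Rightarrow> const \<Rightarrow> real) \<Rightarrow> subst \<Rightarrow> eqn \<Rightarrow> real" where
  "eqn_degree RA \<sigma> e = simt RA (subst \<sigma> (fst e)) (subst \<sigma> (snd e))"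

lemma degree_eq_Min: "degree RA P \<sigma> = Min (insert 1 (eqn_degree RA \<sigma> ` P))"
  by (simp add: degree_def eqn_degree_def)

lemma degree_empty [simp]: "degree RA {} \<sigma> = 1"
  by (simp add: degree_eq_Min)

lemma degree_le_one: "finite P \<Longrightarrow> degree RA P \<sigma> \<le> 1"
  by (simp add: degree_eq_Min)

lemma degree_insert:
  assumes "finite P"
  shows "degree RA (insert e P) \<sigma> = min (eqn_degree RA \<sigma> e) (degree RA P \<sigma>)"
proof -
  have "insert 1 (eqn_degree RA \<sigma> ` insert e P) =
      insert (eqn_degree RA \<sigma> e) (insert 1 (eqn_degree RA \<sigma> ` P))"
    by auto
  then show ?thesis
    using assms by (simp add: degree_eq_Min)
qed

lemma degree_Un:
  "finite P \<Longrightarrow> finite Q \<Longrightarrow> degree RA (P \<union> Q) \<sigma> = min (degree RA P \<sigma>) (degree RA Q \<sigma>)"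
  by (induction P rule: finite_induct) (auto simp: degree_insert min.assoc degree_le_one)

lemma degree_zip:
  "length ts = length ss \<Longrightarrow>
     degree RA (set (zip ts ss)) \<sigma> = simts RA (map (subst \<sigma>) ts) (map (subst \<sigma>) ss)"
  by (induction ts ss rule: list_induct2) (auto simp: degree_insert eqn_degree_def)

lemma degree_insert_Lam:
  "finite P \<Longrightarrow> degree RA (insert (Lam T t, Lam T s) P) \<sigma> = degree RA (insert (t, s) P) \<sigma>"
  by (simp add: degree_insert eqn_degree_def)

lemma degree_insert_Rig:
  "finite P \<Longrightarrow> length ts = length ss \<Longrightarrow>
     degree RA (insert (Rig f ts, Rig g ss) P) \<sigma> =
       min (simh RA f g) (degree RA (set (zip ts ss) \<union> P) \<sigma>)"
  by (simp add: degree_insert degree_Un degree_zip eqn_degree_def min.assoc)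

lemma degree_image_subst_eq:
  assumes "scoped_prob P" and "scoped_subst \<theta>" and "scoped_subst \<tau>"
  shows "degree RA (subst_eq \<theta> ` P) \<tau> = degree RA P (comp_s \<theta> \<tau>)"
proof -
  have deg: "degree RA Q \<sigma> = Min (insert 1 ((\<lambda>e. simt RA (fst e) (snd e)) ` subst_eq \<sigma> ` Q))"
    for Q \<sigma>
    by (simp add: degree_def subst_eq_def image_image)
  show ?thesis
    unfolding deg image_subst_eq_comp_s[OF assms] ..
qed

lemma simt_refl: "similarity RA \<Longrightarrow> simt RA t t = 1"
proof (induction t)
  case (Rig h ts)
  then have "simts RA ts ts = 1"
    by (induction ts) auto
  moreover have "simh RA h h = 1"
    using Rig.prems by (cases h) (auto simp: similarity_def)
  ultimately show ?case by simp
qed auto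

lemma simt_sym: "similarity RA \<Longrightarrow> simt RA t s = simt RA s t"
proof (induction t arbitrary: s)
  case (Lam T t)
  then show ?case by (cases s) auto
next
  case (Rig h ts)
  have simts: "simts RA ts ss = simts RA ss ts" for ss
    using Rig.IH Rig.prems
  proof (induction ts arbitrary: ss)
    case Nil
    then show ?case by (cases ss) auto
  next
    case (Cons t ts)
    have "simts RA ts ss' = simts RA ss' ts" for ss'
      using Cons.prems by (intro Cons.IH) auto
    then show ?case using Cons.prems by (cases ss) auto
  qed
  have "simh RA h g = simh RA g h" for g
    using Rig.prems by (cases h; cases g) (auto simp: similarity_def)
  then show ?case using simts by (cases s) auto
next
  case (Flex F xs)
  then show ?case by (cases s) auto
qed

lemma degree_insert_swap:
  "similarity RA \<Longrightarrow> degree RA (insert (t, s) P) \<sigma> = degree RA (insert (s, t) P) \<sigma>"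
  using simt_sym[of RA "subst \<sigma> t" "subst \<sigma> s"] by (simp add: degree_eq_Min eqn_degree_def)

section \<open>Soundness of VarElim\<close>

text \<open>VE1 does not apply its substitution to the other pending equations; this is sound because
  the eliminated variable occurs nowhere else.\<close>
definition isolated_lhs :: "eqn set \<Rightarrow> bool" where
  "isolated_lhs Q \<longleftrightarrow> (\<forall>e\<in>Q. \<exists>K. fv (fst e) = {K} \<and> K \<notin> fv (snd e) \<union> fv_prob (Q - {e}))"

definition lifts_unifiers :: "subst \<Rightarrow> eqn set \<Rightarrow> eqn set \<Rightarrow> bool" where
  "lifts_unifiers \<sigma> Q P \<longleftrightarrow> (\<forall>\<rho>. scoped_subst \<rho> \<longrightarrow> unifies \<rho> Q \<longrightarrow> unifies (comp_s \<sigma> \<rho>) P)"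

definition ve_invariant :: "eqn set \<Rightarrow> eqn set \<times> subst \<Rightarrow> bool" where
  "ve_invariant P Q\<sigma> \<longleftrightarrow>
     scoped_prob (fst Q\<sigma>) \<and> isolated_lhs (fst Q\<sigma>) \<and> wt_subst (snd Q\<sigma>) \<and>
     lifts_unifiers (snd Q\<sigma>) (fst Q\<sigma>) P"

lemma isolated_lhs_insertD:
  "isolated_lhs (insert e Q) \<Longrightarrow> e \<notin> Q \<Longrightarrow> fv (fst e) = {F} \<Longrightarrow> F \<notin> fv (snd e) \<union> fv_prob Q"
  unfolding isolated_lhs_def by force

lemma isolated_lhsE:
  assumes "isolated_lhs Q" and "e \<in> Q"
  obtains K where "fv (fst e) = {K}" and "K \<notin> fv (snd e) \<union> fv_prob (Q - {e})"
  using assms unfolding isolated_lhs_def by blast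

lemma lifts_unifiers_idsub: "scoped_prob P \<Longrightarrow> lifts_unifiers idsub P P"
  unfolding lifts_unifiers_def
  using unifies_comp_s[OF _ wt_subst_scoped[OF wt_subst_idsub]] image_subst_eq_idsub by metis

lemma lifts_unifiers_comp_s:
  assumes "lifts_unifiers \<sigma> Q P" and "lifts_unifiers \<theta> Q' Q"
    and "wt_subst \<sigma>" and "scoped_subst \<theta>"
  shows "lifts_unifiers (comp_s \<sigma> \<theta>) Q' P"
  using assms scoped_subst_comp_s comp_s_assoc unfolding lifts_unifiers_def by metis

lemma lifts_unifiers_unifies: "lifts_unifiers \<phi> {} P \<Longrightarrow> wt_subst \<phi> \<Longrightarrow> unifies \<phi> P"
  unfolding lifts_unifiers_def
  using wt_subst_scoped[OF wt_subst_idsub] comp_s_idsub by (fastforce simp: unifies_def)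

lemma lifts_unifiers_solved:
  assumes "scoped_prob (insert e Q)" and "scoped_subst \<theta>"
    and "subst \<theta> (fst e) = subst \<theta> (snd e)"
  shows "lifts_unifiers \<theta> (subst_eq \<theta> ` Q) (insert e Q)"
  unfolding lifts_unifiers_def
  using assms unifies_comp_s[OF assms(1,2)] by (simp add: unifies_def subst_eq_def)

lemma rev_nth_idx: "x \<in> set xs \<Longrightarrow> rev xs ! (length xs - Suc (idx xs x)) = x"
proof -
  assume "x \<in> set xs"
  then have "idx xs x < length xs" and "xs ! idx xs x = x"
    by (induction xs) auto
  then show ?thesis by (simp add: rev_nth Suc_diff_Suc)
qed

lemma subst_Flex_VE1:
  assumes "\<theta> F = lams Us (Rig (inner_head xs a) (map (\<lambda>H. eta_app H (rev [0..<length xs])) Hs))"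
    and "length xs = length Us" and "(\<exists>c. a = Con c) \<or> (\<exists>i. a = Bd i \<and> i \<in> set xs)"
  shows "subst \<theta> (Flex F xs) = Rig a (map (\<lambda>H. eta_app H xs) Hs)"
proof -
  have "map (ren ((!) (rev xs))) (map (\<lambda>H. eta_app H (rev [0..<length xs])) Hs) =
      map (\<lambda>H. eta_app H xs) Hs"
    by (simp add: ren_eta_app map_rev_nth_rev_upt)
  with subst_Flex_lams[where \<theta> = \<theta> and F = F, OF assms(1,2)] assms(3) show ?thesis
    by (auto simp: rev_nth_idx)
qed

lemma subst_Flex_VE2:
  assumes "\<theta> F = lams Us (Flex H (map (\<lambda>z. length xs - 1 - idx xs z) zs))"
    and "length xs = length Us" and "set zs \<subseteq> set xs"
  shows "subst \<theta> (Flex F xs) = Flex H zs"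
  using subst_Flex_lams[where \<theta> = \<theta> and F = F, OF assms(1,2)] assms(3)
  by (auto simp: rev_nth_idx intro!: map_idI)

lemma fv_zip_eta_app:
  assumes "e \<in> set (zip (map (\<lambda>H. eta_app H xs) Hs) ss)"
  shows "fv (fst e) \<subseteq> set Hs" and "snd e \<in> set ss"
proof -
  obtain t s where e: "e = (t, s)"
    by fastforce
  then have "t \<in> set (map (\<lambda>H. eta_app H xs) Hs)" "s \<in> set ss"
    using assms by (auto dest: set_zip_leftD set_zip_rightD)
  then show "fv (fst e) \<subseteq> set Hs" and "snd e \<in> set ss"
    using e by auto
qed

lemma fv_prob_zip_eta_app:
  "fv_prob (set (zip (map (\<lambda>H. eta_app H xs) Hs) ss)) \<subseteq> set Hs \<union> (\<Union>s\<in>set ss. fv s)"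
  using fv_zip_eta_app by (fastforce simp: fv_prob_def)

lemma isolated_lhs_mono:
  assumes "isolated_lhs Q" and "Q' \<subseteq> Q"
  shows "isolated_lhs Q'"
  unfolding isolated_lhs_def
proof
  fix e assume "e \<in> Q'"
  then obtain K where "fv (fst e) = {K}" "K \<notin> fv (snd e) \<union> fv_prob (Q - {e})"
    using assms isolated_lhsE by blast
  moreover have "fv_prob (Q' - {e}) \<subseteq> fv_prob (Q - {e})"
    using assms(2) by (intro fv_prob_mono) auto
  ultimately show "\<exists>K. fv (fst e) = {K} \<and> K \<notin> fv (snd e) \<union> fv_prob (Q' - {e})"
    by blast
qed

lemma isolated_lhs_Un:
  assumes "isolated_lhs A" and "isolated_lhs B"
    and A: "\<And>e. e \<in> A \<Longrightarrow> fv (fst e) \<inter> fv_prob B = {}"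
    and B: "\<And>e. e \<in> B \<Longrightarrow> fv (fst e) \<inter> fv_prob A = {}"
  shows "isolated_lhs (A \<union> B)"
  unfolding isolated_lhs_def
proof
  fix e assume "e \<in> A \<union> B"
  have sub: "fv_prob (A \<union> B - {e}) \<subseteq> fv_prob (A - {e}) \<union> fv_prob B"
    "fv_prob (A \<union> B - {e}) \<subseteq> fv_prob A \<union> fv_prob (B - {e})"
    by (auto simp: fv_prob_def)
  from \<open>e \<in> A \<union> B\<close> consider "e \<in> A" | "e \<in> B"
    by blast
  then show "\<exists>K. fv (fst e) = {K} \<and> K \<notin> fv (snd e) \<union> fv_prob (A \<union> B - {e})"
  proof cases
    case 1
    obtain K where "fv (fst e) = {K}" "K \<notin> fv (snd e) \<union> fv_prob (A - {e})"
      using assms(1) 1 by (rule isolated_lhsE)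
    with A[OF 1] sub(1) show ?thesis
      by blast
  next
    case 2
    obtain K where "fv (fst e) = {K}" "K \<notin> fv (snd e) \<union> fv_prob (B - {e})"
      using assms(2) 2 by (rule isolated_lhsE)
    with B[OF 2] sub(2) show ?thesis
      by blast
  qed
qed

lemma isolated_lhs_zip_eta_app:
  assumes Hs: "length Hs = length ss" "distinct Hs" "set Hs \<inter> (\<Union>s\<in>set ss. fv s) = {}"
  shows "isolated_lhs (set (zip (map (\<lambda>H. eta_app H xs) Hs) ss))"
  unfolding isolated_lhs_def
proof
  let ?Z = "set (zip (map (\<lambda>H. eta_app H xs) Hs) ss)"
  have Z: "\<exists>i<length ss. e' = (eta_app (Hs ! i) xs, ss ! i)" if "e' \<in> ?Z" for e'
    using that Hs(1) by (auto simp: set_zip)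
  fix e assume "e \<in> ?Z"
  then obtain i where i: "i < length ss" "e = (eta_app (Hs ! i) xs, ss ! i)"
    using Z by blast
  have fresh: "Hs ! i \<notin> fv s" if "s \<in> set ss" for s
    using Hs i that by force
  have "Hs ! i \<notin> fv_prob (?Z - {e})"
  proof
    assume "Hs ! i \<in> fv_prob (?Z - {e})"
    then obtain j where "j < length ss" "j \<noteq> i" "Hs ! i \<in> {Hs ! j} \<union> fv (ss ! j)"
      using Z i by (fastforce simp: fv_prob_def)
    then show False
      using Hs(1,2) i(1) fresh by (auto simp: nth_eq_iff_index_eq)
  qed
  then show "\<exists>K. fv (fst e) = {K} \<and> K \<notin> fv (snd e) \<union> fv_prob (?Z - {e})"
    using i fresh[OF nth_mem[OF i(1)]] by auto
qed

lemma isolated_lhs_VE1: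
  assumes iso: "isolated_lhs (insert (t, Rig a ss) Q)" and new: "(t, Rig a ss) \<notin> Q"
    and Hs: "length Hs = length ss" "distinct Hs" "set Hs \<inter> fv_prob (insert (t, Rig a ss) Q) = {}"
  shows "isolated_lhs (set (zip (map (\<lambda>H. eta_app H xs) Hs) ss) \<union> Q)"
proof (rule isolated_lhs_Un)
  show "isolated_lhs (set (zip (map (\<lambda>H. eta_app H xs) Hs) ss))"
    using Hs by (intro isolated_lhs_zip_eta_app) auto
  show "isolated_lhs Q"
    using iso by (rule isolated_lhs_mono) auto
  show "fv (fst e) \<inter> fv_prob Q = {}" if "e \<in> set (zip (map (\<lambda>H. eta_app H xs) Hs) ss)" for e
    using fv_zip_eta_app(1)[OF that] Hs(3) by auto
  show "fv (fst e) \<inter> fv_prob (set (zip (map (\<lambda>H. eta_app H xs) Hs) ss)) = {}" if "e \<in> Q" for e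
  proof -
    have "e \<in> insert (t, Rig a ss) Q"
      using \<open>e \<in> Q\<close> by simp
    with iso obtain K
      where K: "fv (fst e) = {K}" "K \<notin> fv (snd e) \<union> fv_prob (insert (t, Rig a ss) Q - {e})"
      by (rule isolated_lhsE)
    have "fv (fst e) \<subseteq> fv_prob (insert (t, Rig a ss) Q)"
      using \<open>e \<in> insert (t, Rig a ss) Q\<close> by (auto simp: fv_prob_def)
    then have "K \<notin> set Hs"
      using Hs(3) K(1) by auto
    moreover have "fv (Rig a ss) \<subseteq> fv_prob (insert (t, Rig a ss) Q - {e})"
      using new \<open>e \<in> Q\<close> by (force simp: fv_prob_def)
    then have "K \<notin> fv (Rig a ss)"
      using K(2) by blast
    ultimately show ?thesis
      using K(1) fv_prob_zip_eta_app[of xs Hs ss] by auto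
  qed
qed

lemma isolated_lhs_image_subst_eq:
  assumes iso: "isolated_lhs (insert e0 Q)" and new: "e0 \<notin> Q"
    and id: "\<And>X. X \<notin> V \<Longrightarrow> \<theta> X = var_term X" and V: "V \<subseteq> fv (fst e0) \<union> fv (snd e0)"
    and H: "\<And>X. X \<in> V \<Longrightarrow> fv (\<theta> X) = {H}" and fresh: "H \<notin> fv_prob (insert e0 Q)"
  shows "isolated_lhs (subst_eq \<theta> ` Q)"
  unfolding isolated_lhs_def
proof
  fix e' assume "e' \<in> subst_eq \<theta> ` Q"
  then obtain e where e: "e \<in> Q" "e' = subst_eq \<theta> e" by blast
  have "e \<in> insert e0 Q"
    using e(1) by simp
  with iso obtain K where K: "fv (fst e) = {K}" "K \<notin> fv (snd e) \<union> fv_prob (insert e0 Q - {e})"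
    by (rule isolated_lhsE)
  have "e0 \<in> insert e0 Q - {e}"
    using new e(1) by auto
  then have "fv (fst e0) \<union> fv (snd e0) \<subseteq> fv_prob (insert e0 Q - {e})"
    unfolding fv_prob_def by blast
  then have "K \<notin> V"
    using K(2) V by blast
  moreover have "K \<in> fv_prob (insert e0 Q)"
    using K(1) e(1) unfolding fv_prob_def by blast
  then have "K \<noteq> H"
    using fresh by blast
  ultimately have "K \<in> fv (\<theta> X) \<longleftrightarrow> X = K" for X
    using id H by (cases "X \<in> V") auto
  then have fv_iff: "K \<in> fv (subst \<theta> t) \<longleftrightarrow> K \<in> fv t" for t
    by (simp add: fv_subst)
  have "K \<notin> fv (subst \<theta> (fst f)) \<union> fv (subst \<theta> (snd f))" if "f \<in> Q" "f \<noteq> e" for f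
    using K(2) that fv_iff by (auto simp: fv_prob_def)
  then have "K \<notin> fv_prob (subst_eq \<theta> ` (Q - {e}))"
    by (auto simp: fv_prob_def subst_eq_def)
  moreover have "subst_eq \<theta> ` Q - {e'} \<subseteq> subst_eq \<theta> ` (Q - {e})"
    using e(2) by auto
  ultimately have "K \<notin> fv_prob (subst_eq \<theta> ` Q - {e'})"
    using fv_prob_mono by blast
  moreover have "fv (subst \<theta> (fst e)) = {K}"
    using K(1) id[OF \<open>K \<notin> V\<close>] by (simp add: fv_subst)
  ultimately show "\<exists>K. fv (fst e') = {K} \<and> K \<notin> fv (snd e') \<union> fv_prob (subst_eq \<theta> ` Q - {e'})"
    using e K(2) fv_iff by (auto simp: subst_eq_def)
qed

lemma lifts_unifiers_VE1:
  assumes sc: "scoped_prob (insert (Flex F xs, Rig a ss) Q)" and F: "F \<notin> fv (Rig a ss) \<union> fv_prob Q"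
    and others: "\<And>X. X \<noteq> F \<Longrightarrow> \<theta> X = var_term X" and \<theta>F: "subst \<theta> (Flex F xs) = Rig a ts"
    and len: "length ts = length ss" and sc\<theta>: "scoped_subst \<theta>"
  shows "lifts_unifiers \<theta> (set (zip ts ss) \<union> Q) (insert (Flex F xs, Rig a ss) Q)"
  unfolding lifts_unifiers_def
proof (intro allI impI)
  fix \<rho> assume \<rho>: "scoped_subst \<rho>" "unifies \<rho> (set (zip ts ss) \<union> Q)"
  obtain n where "scoped n (Rig a ss)"
    using sc by auto
  then have "subst \<theta> (Rig a ss) = Rig a ss"
    by (rule subst_id_on_fv) (metis F UnI1 others)
  moreover have "scoped_prob Q"
    using sc by simp
  then have "subst_eq \<theta> ` Q = Q"
    by (rule image_subst_eq_id_on) (metis F UnI2 others)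
  moreover have "subst \<rho> (Rig a ts) = subst \<rho> (Rig a ss)"
    using \<rho>(2) len by (intro unifies_Rig_zip) auto
  ultimately have "unifies \<rho> (subst_eq \<theta> ` insert (Flex F xs, Rig a ss) Q)"
    using \<rho>(2) \<theta>F by (simp add: subst_eq_def)
  then show "unifies (comp_s \<theta> \<rho>) (insert (Flex F xs, Rig a ss) Q)"
    using unifies_comp_s[OF sc sc\<theta> \<rho>(1)] by simp
qed

lemma ve_invariant_VE1:
  assumes inv: "ve_invariant P (insert (Flex F xs, Rig a ss) Q, \<sigma>)"
    and new: "(Flex F xs, Rig a ss) \<notin> Q"
    and a: "(\<exists>c. a = Con c) \<or> (\<exists>i. a = Bd i \<and> i \<in> set xs)"
    and Hs: "length Hs = length ss" "distinct Hs"
      "set Hs \<inter> fv_prob (insert (Flex F xs, Rig a ss) Q) = {}"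
    and \<theta>: "\<theta> = var_term(F := lams (args_of (snd F))
      (Rig (inner_head xs a) (map (\<lambda>H. eta_app H (rev [0..<length xs])) Hs)))"
    and wt: "wt_subst \<theta>"
  shows "ve_invariant P (set (zip (map (\<lambda>H. eta_app H xs) Hs) ss) \<union> Q, comp_s \<sigma> \<theta>)"
proof -
  let ?e = "(Flex F xs, Rig a ss)"
  let ?Z = "set (zip (map (\<lambda>H. eta_app H xs) Hs) ss)"
  have sc: "scoped_prob (insert ?e Q)" and iso: "isolated_lhs (insert ?e Q)"
    and wt\<sigma>: "wt_subst \<sigma>" and lift: "lifts_unifiers \<sigma> (insert ?e Q) P"
    using inv by (simp_all add: ve_invariant_def)
  obtain n where n: "scoped n (Flex F xs)" "scoped n (Rig a ss)"
    using sc by auto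
  have len: "length xs = length (args_of (snd F))"
    using n(1) by (simp add: arity_def)
  have F: "F \<notin> fv (Rig a ss) \<union> fv_prob Q"
    using isolated_lhs_insertD[OF iso new] by simp
  \<comment> \<open>The fresh variables take at least \<open>length xs\<close> arguments: read off from \<open>wt_subst \<theta>\<close>.\<close>
  have "scoped (arity F) (Rig (inner_head xs a) (map (\<lambda>H. eta_app H (rev [0..<length xs])) Hs))"
    using wt_subst_scoped_image[OF wt, of F] \<theta> by (simp add: length_args_of)
  then have "length xs \<le> arity H" if "H \<in> set Hs" for H
    using scoped_RigD[of "arity F" _ _ "eta_app H (rev [0..<length xs])"] that
    by (simp add: scoped_eta_app)
  then have "\<forall>t\<in>set (map (\<lambda>H. eta_app H xs) Hs). scoped n t"
    using n(1) by (auto simp: scoped_eta_app)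
  moreover have "\<forall>s\<in>set ss. scoped n s"
    using n(2) scoped_RigD by blast
  ultimately have "scoped_prob ?Z"
    by (rule scoped_prob_zip)
  have "lifts_unifiers \<theta> (?Z \<union> Q) (insert ?e Q)"
  proof (rule lifts_unifiers_VE1[OF sc F _ _ _ wt_subst_scoped[OF wt]])
    show "subst \<theta> (Flex F xs) = Rig a (map (\<lambda>H. eta_app H xs) Hs)"
      by (rule subst_Flex_VE1[OF _ len a]) (simp add: \<theta>)
  qed (simp_all add: \<theta> Hs(1))
  then show ?thesis
    using \<open>scoped_prob ?Z\<close> sc isolated_lhs_VE1[OF iso new Hs] wt_subst_comp_s[OF wt\<sigma> wt]
      lifts_unifiers_comp_s[OF lift _ wt\<sigma> wt_subst_scoped[OF wt]]
    by (simp add: ve_invariant_def)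
qed

lemma ve_invariant_VE2:
  assumes inv: "ve_invariant P (insert (Flex F xs, Flex G ys) Q, \<sigma>)"
    and new: "(Flex F xs, Flex G ys) \<notin> Q"
    and zs: "zs = filter (\<lambda>x. x \<in> set ys) xs"
    and H: "H \<notin> fv_prob (insert (Flex F xs, Flex G ys) Q)"
    and \<theta>: "\<theta> = (var_term(G := lams (args_of (snd G))
        (Flex H (map (\<lambda>z. length ys - 1 - idx ys z) zs))))
      (F := lams (args_of (snd F)) (Flex H (map (\<lambda>z. length xs - 1 - idx xs z) zs)))"
    and wt: "wt_subst \<theta>"
  shows "ve_invariant P (subst_eq \<theta> ` Q, comp_s \<sigma> \<theta>)"
proof -
  let ?e = "(Flex F xs, Flex G ys)"
  have sc: "scoped_prob (insert ?e Q)" and iso: "isolated_lhs (insert ?e Q)"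
    and wt\<sigma>: "wt_subst \<sigma>" and lift: "lifts_unifiers \<sigma> (insert ?e Q) P"
    using inv by (simp_all add: ve_invariant_def)
  obtain n where "scoped n (Flex F xs)" "scoped n (Flex G ys)"
    using sc by auto
  then have len: "length xs = length (args_of (snd F))" "length ys = length (args_of (snd G))"
    by (simp_all add: arity_def)
  have "F \<noteq> G"
    using isolated_lhs_insertD[OF iso new] by simp
  have "subst \<theta> (Flex F xs) = Flex H zs"
    by (rule subst_Flex_VE2[OF _ len(1)]) (auto simp: \<theta> zs)
  moreover have "subst \<theta> (Flex G ys) = Flex H zs"
    using \<open>F \<noteq> G\<close> by (intro subst_Flex_VE2[OF _ len(2)]) (auto simp: \<theta> zs)
  ultimately have "lifts_unifiers \<theta> (subst_eq \<theta> ` Q) (insert ?e Q)"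
    by (intro lifts_unifiers_solved[OF sc wt_subst_scoped[OF wt]]) simp
  moreover have "isolated_lhs (subst_eq \<theta> ` Q)"
    by (rule isolated_lhs_image_subst_eq[OF iso new, where V = "{F, G}" and H = H])
      (use H in \<open>auto simp: \<theta>\<close>)
  ultimately show ?thesis
    using sc scoped_prob_image_subst_eq[OF _ wt_subst_scoped[OF wt]] wt_subst_comp_s[OF wt\<sigma> wt]
      lifts_unifiers_comp_s[OF lift _ wt\<sigma> wt_subst_scoped[OF wt]]
    by (simp add: ve_invariant_def)
qed

lemma ve_step_invariant: "ve_step W p q \<Longrightarrow> ve_invariant P p \<Longrightarrow> ve_invariant P q"
proof (induction rule: ve_step.induct)
  case (VE1 Q F xs a ss Q0 Hs \<sigma> \<theta>)
  then show ?case
    using ve_invariant_VE1[of P F xs a ss Q0 \<sigma> Hs \<theta>] by blast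
next
  case (VE2 Q F xs G ys Q0 zs H \<sigma> \<theta>)
  then show ?case
    using ve_invariant_VE2[of P F xs G ys Q0 \<sigma> zs H \<theta>] by blast
qed

lemma var_elim_unifies:
  assumes ve: "var_elim W t s \<phi>" and "scoped n t" "scoped n s" and "fv t = {F}" "F \<notin> fv s"
  shows "wt_subst \<phi> \<and> subst \<phi> t = subst \<phi> s"
proof -
  have "scoped_prob {(t, s)}"
    using assms(2,3) by auto
  then have "ve_invariant {(t, s)} ({(t, s)}, idsub)"
    using assms(4,5) wt_subst_idsub lifts_unifiers_idsub
    by (simp add: ve_invariant_def isolated_lhs_def fv_prob_def)
  with ve have "ve_invariant {(t, s)} ({}, \<phi>)"
    unfolding var_elim_def by (induction rule: rtranclp_induct) (auto intro: ve_step_invariant)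
  then have "wt_subst \<phi>" and "lifts_unifiers \<phi> {} {(t, s)}"
    by (simp_all add: ve_invariant_def)
  then show ?thesis
    using lifts_unifiers_unifies[of \<phi> "{(t, s)}"] by simp
qed

section \<open>One step of HOPSU\<close>

lemma subst_Flex_SV:
  assumes "\<theta> F = lams (args_of (snd F))
      (Flex H [length xs - 1 - i. i \<leftarrow> [0..<length xs], xs ! i = ys ! i])"
    and "scoped_prob (insert (Flex F xs, Flex F ys) P)" and "length xs = length ys"
  shows "subst \<theta> (Flex F xs) = subst \<theta> (Flex F ys)"
proof -
  let ?L = "[length xs - 1 - i. i \<leftarrow> [0..<length xs], xs ! i = ys ! i]"
  have "length xs = length (args_of (snd F))"
    using assms(2) by (auto simp: arity_def)
  moreover have "map ((!) (rev xs)) ?L = map ((!) (rev ys)) ?L"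
    using assms(3) by (auto simp: rev_nth)
  ultimately show ?thesis
    using subst_Flex_lams[where \<theta> = \<theta> and F = F, OF assms(1)] assms(3) by simp
qed

lemma var_elim_restr_unifies:
  assumes "var_elim W (Flex F xs) u \<phi>" and "scoped_prob (insert (Flex F xs, u) P)"
    and "F \<notin> fv u"
  defines "\<theta> \<equiv> restr \<phi> (insert F (fv u))"
  shows "wt_subst \<theta> \<and> subst \<theta> (Flex F xs) = subst \<theta> u"
proof -
  obtain n where n: "scoped n (Flex F xs)" "scoped n u"
    using assms(2) by auto
  have "wt_subst \<phi> \<and> subst \<phi> (Flex F xs) = subst \<phi> u"
    using var_elim_unifies[OF assms(1) n _ assms(3)] by simp
  moreover have "subst \<theta> (Flex F xs) = subst \<phi> (Flex F xs)" "subst \<theta> u = subst \<phi> u"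
    by (auto simp: \<theta>_def restr_def intro: subst_cong)
  ultimately show ?thesis
    by (simp add: \<theta>_def wt_subst_restr)
qed

lemma hstep_wt_subst:
  assumes "config \<mu> P \<sigma> d" and "hstep RA \<mu> P \<sigma> d P' \<theta> d'"
  shows "wt_subst \<theta>"
  using assms(2)
proof cases
  case (LF F xs u P0 \<phi>)
  with config_scoped_prob[OF assms(1)] show ?thesis
    using var_elim_restr_unifies by blast
qed (simp_all add: wt_subst_idsub)

lemma hstep_cut_le: "\<mu> \<le> 1 \<Longrightarrow> hstep RA \<mu> P \<sigma> d P' \<theta> d' \<Longrightarrow> \<mu> \<le> d'"
  by (erule hstep.cases) simp_all

lemma degree_comp_s_solved:
  assumes "finite Q" and "scoped_prob (insert e Q)" and "similarity RA"
    and "scoped_subst \<theta>" and "scoped_subst \<tau>" and "subst \<theta> (fst e) = subst \<theta> (snd e)"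
  shows "degree RA (insert e Q) (comp_s \<theta> \<tau>) = min 1 (degree RA (subst_eq \<theta> ` Q) \<tau>)"
proof -
  have "degree RA (insert e Q) (comp_s \<theta> \<tau>) = degree RA (subst_eq \<theta> ` insert e Q) \<tau>"
    using degree_image_subst_eq[OF assms(2,4,5)] by simp
  also have "\<dots> = min (eqn_degree RA \<tau> (subst_eq \<theta> e)) (degree RA (subst_eq \<theta> ` Q) \<tau>)"
    using assms(1) by (simp add: degree_insert)
  also have "eqn_degree RA \<tau> (subst_eq \<theta> e) = 1"
    using assms(3,6) simt_refl by (simp add: eqn_degree_def subst_eq_def)
  finally show ?thesis .
qed

lemma hstep_degree:
  assumes sim: "similarity RA" and conf: "config \<mu> P \<sigma> d"
    and step: "hstep RA \<mu> P \<sigma> d P' \<theta> d'" and \<tau>: "wt_subst \<tau>"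
  shows "degree RA P (comp_s \<theta> \<tau>) = min d' (degree RA P' \<tau>)"
proof -
  have fin: "finite P" and sc: "scoped_prob P"
    using conf config_scoped_prob by (auto simp: config_def)
  have sc\<tau>: "scoped_subst \<tau>"
    using \<tau> by (rule wt_subst_scoped)
  have keep: "degree RA P (comp_s idsub \<tau>) = degree RA P \<tau>"
    using degree_image_subst_eq[OF sc wt_subst_scoped[OF wt_subst_idsub] sc\<tau>]
    by (simp add: image_subst_eq_idsub[OF sc])
  from step show ?thesis
  proof cases
    case (Abs T t s P0)
    with fin keep show ?thesis
      using degree_le_one[of P' RA \<tau>] by (simp add: degree_insert_Lam)
  next
    case (Dec f ts g ss P0)
    with fin keep show ?thesis
      by (simp add: degree_insert_Rig)
  next
    case (SV F xs ys P0 H)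
    then have "P = insert (Flex F xs, Flex F ys) P0"
      by simp
    with sc fin have sc0: "scoped_prob (insert (Flex F xs, Flex F ys) P0)" and fin0: "finite P0"
      by simp_all
    have "subst \<theta> (Flex F xs) = subst \<theta> (Flex F ys)"
      using sc0 by (rule subst_Flex_SV[rotated]) (use SV in simp_all)
    moreover have "scoped_subst \<theta>"
      using SV by (simp add: wt_subst_scoped)
    ultimately show ?thesis
      using degree_comp_s_solved[OF fin0 sc0 sim _ sc\<tau>] SV by simp
  next
    case (Ori a ss F xs P0)
    with fin keep sim show ?thesis
      using degree_le_one[of P' RA \<tau>] degree_insert_swap by simp
  next
    case (LF F xs u P0 \<phi>)
    then have "P = insert (Flex F xs, u) P0"
      by simp
    with sc fin have sc0: "scoped_prob (insert (Flex F xs, u) P0)" and fin0: "finite P0"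
      by simp_all
    have "wt_subst \<theta>" and "subst \<theta> (Flex F xs) = subst \<theta> u"
      using sc0 LF var_elim_restr_unifies by blast+
    from degree_comp_s_solved[OF fin0 sc0 sim wt_subst_scoped[OF this(1)] sc\<tau>] this(2) LF
    show ?thesis
      by simp
  qed
qed

theorem lemma1:
  fixes RA :: "const \<Rightarrow> const \<Rightarrow> real" and \<mu> d d' d'' :: real
    and P P' :: "eqn set" and \<sigma> \<theta> \<tau> :: subst
  assumes "similarity RA"
    and "0 < \<mu>" and "\<mu> \<le> 1"
    and "config \<mu> P \<sigma> d"
    and "hstep RA \<mu> P \<sigma> d P' \<theta> d'"
    and "unifier RA \<mu> P' \<tau> d''"
  shows "unifier RA \<mu> P (comp_s \<theta> \<tau>) (min d' d'')"
proof -
  have \<tau>: "wt_subst \<tau>" "degree RA P' \<tau> = d''" "\<mu> \<le> d''"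
    using assms(6) by (simp_all add: unifier_def)
  have "wt_subst (comp_s \<theta> \<tau>)"
    using hstep_wt_subst[OF assms(4,5)] \<tau>(1) by (rule wt_subst_comp_s)
  moreover have "degree RA P (comp_s \<theta> \<tau>) = min d' d''"
    using hstep_degree[OF assms(1,4,5) \<tau>(1)] \<tau>(2) by simp
  moreover have "\<mu> \<le> min d' d''"
    using hstep_cut_le[OF assms(3,5)] \<tau>(3) by simp
  ultimately show ?thesis
    by (simp add: unifier_def)
qed

end
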